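(* Let $X$ be a set, let $T:\mathcal P(X)\to\mathcal P(X)$ be an order reversing quasi involution, and let $X_0=\{x\in X:\ x\in T(\{x\})\}$. Let $K_0\subseteq X$ satisfy $K_0\subseteq TK_0$. Then there exists $K\subseteq X$ with $K_0\subseteq K$ and $TK\cap X_0=K$. In particular, if $X=X_0$, then for every $x_0\in X$ there exists $K\subseteq X$ with $x_0\in K=TK$.
   Context: $\mathcal P(X)$ denotes the power set of $X$. A map $T:\mathcal P(X)\to\mathcal P(X)$ is an order reversing quasi involution if for all $K,L\subseteq X$: (i) $K\subseteq TTK$, and (ii) $L\subseteq K$ implies $TK\subseteq TL$. *)

theory Defs
  imports Main
begin

definition order_reversing_quasi_involution :: "'a set \<Rightarrow> ('a set \<Rightarrow> 'a set) \<Rightarrow> bool" where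
  "order_reversing_quasi_involution X T \<longleftrightarrow>
     (\<forall>K. K \<subseteq> X \<longrightarrow> T K \<subseteq> X) \<and>
     (\<forall>K. K \<subseteq> X \<longrightarrow> K \<subseteq> T (T K)) \<and>
     (\<forall>K L. K \<subseteq> X \<longrightarrow> L \<subseteq> K \<longrightarrow> T K \<subseteq> T L)"

end

theory Submission
  imports Defs
begin

text \<open>Call K consistent if K \<subseteq> X and K \<subseteq> T K. Since T is antitone and K \<subseteq> T (T K),
  the intersection of the sets T K over a nonempty family lies in T of its union; so the union
  of a chain of consistent sets is consistent, and Zorn's lemma gives a maximal consistent
  K \<supseteq> K0. Each x \<in> K lies in X0 because T K \<subseteq> T {x}. Conversely, for y \<in> T K \<inter> X0 we get
  K \<subseteq> T (T K) \<subseteq> T {y}, hence K \<union> {y} is consistent and maximality gives y \<in> K.\<close>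

locale quasi_involution =
  fixes X :: "'a set" and T :: "'a set \<Rightarrow> 'a set"
  assumes order_reversing_quasi_involution: "order_reversing_quasi_involution X T"
begin

lemma T_subset_carrier: "K \<subseteq> X \<Longrightarrow> T K \<subseteq> X"
  using order_reversing_quasi_involution
  unfolding order_reversing_quasi_involution_def by simp

lemma subset_TT: "K \<subseteq> X \<Longrightarrow> K \<subseteq> T (T K)"
  using order_reversing_quasi_involution
  unfolding order_reversing_quasi_involution_def by simp

lemma T_antimono: "K \<subseteq> X \<Longrightarrow> L \<subseteq> K \<Longrightarrow> T K \<subseteq> T L"
  using order_reversing_quasi_involution
  unfolding order_reversing_quasi_involution_def by simp

lemma subset_T_sym:
  assumes "L \<subseteq> X" "K \<subseteq> T L"
  shows "L \<subseteq> T K"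
proof -
  have "T (T L) \<subseteq> T K"
    using T_subset_carrier[OF assms(1)] assms(2) by (rule T_antimono)
  then show ?thesis
    using subset_TT[OF \<open>L \<subseteq> X\<close>] by (rule order_trans[rotated])
qed

lemma INT_T_subset_T_Union:
  assumes F: "\<And>K. K \<in> F \<Longrightarrow> K \<subseteq> X" and "F \<noteq> {}"
  shows "(\<Inter>K\<in>F. T K) \<subseteq> T (\<Union>F)"
proof -
  let ?M = "\<Inter>K\<in>F. T K"
  obtain K1 where K1: "K1 \<in> F"
    using \<open>F \<noteq> {}\<close> by blast
  have MX: "?M \<subseteq> X"
    using INT_lower[OF K1] T_subset_carrier[OF F[OF K1]] by (rule order_trans)
  have "K \<subseteq> T ?M" if "K \<in> F" for K
    using F[OF that] INT_lower[OF that] by (rule subset_T_sym)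
  then have "\<Union>F \<subseteq> T ?M"
    by (rule Union_least)
  then show ?thesis
    using MX by (rule subset_T_sym[rotated])
qed

lemma Un_subset_T_Un:
  assumes "K \<subseteq> X" "L \<subseteq> X" "K \<union> L \<subseteq> T K \<inter> T L"
  shows "K \<union> L \<subseteq> T (K \<union> L)"
proof -
  have "(\<Inter>A\<in>{K, L}. T A) \<subseteq> T (\<Union>{K, L})"
    using assms(1,2) by (intro INT_T_subset_T_Union) auto
  then show ?thesis
    using assms(3) by auto
qed

lemma chain_Union_subset_T:
  assumes chain: "chain\<^sub>\<subseteq> C" and C: "\<And>K. K \<in> C \<Longrightarrow> K \<subseteq> X \<and> K \<subseteq> T K"
  shows "\<Union>C \<subseteq> T (\<Union>C)"
proof (cases "C = {}")
  case False
  have "\<Union>C \<subseteq> (\<Inter>K\<in>C. T K)"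
  proof (intro subsetI INT_I)
    fix x K assume "x \<in> \<Union>C" and K: "K \<in> C"
    then obtain J where x: "x \<in> J" and J: "J \<in> C" by blast
    from chain J K have "J \<subseteq> K \<or> K \<subseteq> J"
      unfolding chain_subset_def by blast
    then show "x \<in> T K"
    proof
      assume "J \<subseteq> K"
      then show ?thesis
        using x C[OF K] by blast
    next
      assume "K \<subseteq> J"
      with conjunct1[OF C[OF J]] have "T J \<subseteq> T K"
        by (rule T_antimono)
      then show ?thesis
        using x C[OF J] by blast
    qed
  qed
  also have "\<dots> \<subseteq> T (\<Union>C)"
    using C False by (intro INT_T_subset_T_Union) auto
  finally show ?thesis .
qed simp

lemma maximal_consistent_superset:
  assumes "K0 \<subseteq> X" "K0 \<subseteq> T K0"
  obtains K where "K \<subseteq> X" "K0 \<subseteq> K" "K \<subseteq> T K"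
    "\<And>L. L \<subseteq> X \<Longrightarrow> K \<subseteq> L \<Longrightarrow> L \<subseteq> T L \<Longrightarrow> L = K"
proof -
  define A where "A = {K. K \<subseteq> X \<and> K0 \<subseteq> K \<and> K \<subseteq> T K}"
  have "\<forall>C\<in>chains A. \<exists>U\<in>A. \<forall>K\<in>C. K \<subseteq> U"
  proof (intro ballI)
    fix C assume C: "C \<in> chains A"
    show "\<exists>U\<in>A. \<forall>K\<in>C. K \<subseteq> U"
    proof (cases "C = {}")
      case True
      have "K0 \<in> A"
        using assms unfolding A_def by simp
      with True show ?thesis by blast
    next
      case False
      from C have chain: "chain\<^sub>\<subseteq> C" and CA: "C \<subseteq> A"
        unfolding chains_def by auto
      have "\<Union>C \<subseteq> T (\<Union>C)"
        using chain by (rule chain_Union_subset_T) (use CA in \<open>auto simp: A_def\<close>)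
      moreover have "\<Union>C \<subseteq> X" "K0 \<subseteq> \<Union>C"
        using CA False unfolding A_def by auto
      ultimately have "\<Union>C \<in> A"
        unfolding A_def by simp
      then show ?thesis
        by (blast intro: Union_upper)
    qed
  qed
  from Zorn_Lemma2[OF this] obtain K
    where K: "K \<in> A" and maximal: "\<forall>L\<in>A. K \<subseteq> L \<longrightarrow> L = K"
    by blast
  show ?thesis
  proof (rule that)
    show "K \<subseteq> X" "K0 \<subseteq> K" "K \<subseteq> T K"
      using K unfolding A_def by simp_all
    show "L = K" if "L \<subseteq> X" "K \<subseteq> L" "L \<subseteq> T L" for L
      using that \<open>K0 \<subseteq> K\<close> by (intro maximal[rule_format]) (auto simp: A_def)
  qed
qed

lemma exists_superset_T_Int_eq:
  assumes "K0 \<subseteq> X" "K0 \<subseteq> T K0"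
  shows "\<exists>K. K \<subseteq> X \<and> K0 \<subseteq> K \<and> T K \<inter> {x \<in> X. x \<in> T {x}} = K"
proof -
  obtain K where KX: "K \<subseteq> X" and "K0 \<subseteq> K" and KT: "K \<subseteq> T K"
    and maximal: "\<And>L. L \<subseteq> X \<Longrightarrow> K \<subseteq> L \<Longrightarrow> L \<subseteq> T L \<Longrightarrow> L = K"
    using maximal_consistent_superset[OF assms] by blast
  have "T K \<inter> {x \<in> X. x \<in> T {x}} = K"
  proof (rule subset_antisym)
    show "T K \<inter> {x \<in> X. x \<in> T {x}} \<subseteq> K"
    proof
      fix y assume "y \<in> T K \<inter> {x \<in> X. x \<in> T {x}}"
      then have y: "y \<in> X" "y \<in> T K" "y \<in> T {y}"
        by auto
      have "K \<subseteq> T {y}"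
        using y(2) by (intro subset_T_sym[OF KX]) simp
      then have "K \<union> {y} \<subseteq> T (K \<union> {y})"
        using y KX KT by (intro Un_subset_T_Un) auto
      then have "K \<union> {y} = K"
        using y(1) KX by (intro maximal) auto
      then show "y \<in> K"
        by auto
    qed
    show "K \<subseteq> T K \<inter> {x \<in> X. x \<in> T {x}}"
    proof
      fix x assume x: "x \<in> K"
      have "T K \<subseteq> T {x}"
        using KX x by (intro T_antimono) auto
      then show "x \<in> T K \<inter> {x \<in> X. x \<in> T {x}}"
        using x KX KT by auto
    qed
  qed
  then show ?thesis
    using KX \<open>K0 \<subseteq> K\<close> by blast
qed

end

theorem theorem1p4:
  fixes X :: "'a set" and T :: "'a set \<Rightarrow> 'a set" and K0 :: "'a set"
  assumes T: "order_reversing_quasi_involution X T"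
    and K0X: "K0 \<subseteq> X" and K0T: "K0 \<subseteq> T K0"
  defines "X0 \<equiv> {x \<in> X. x \<in> T {x}}"
  shows "(\<exists>K. K \<subseteq> X \<and> K0 \<subseteq> K \<and> T K \<inter> X0 = K)
    \<and> (X = X0 \<longrightarrow> (\<forall>x0\<in>X. \<exists>K. K \<subseteq> X \<and> x0 \<in> K \<and> K = T K))"
proof -
  interpret quasi_involution X T
    by unfold_locales (fact T)
  have extension: "\<exists>K. K \<subseteq> X \<and> L \<subseteq> K \<and> T K \<inter> X0 = K"
    if "L \<subseteq> X" "L \<subseteq> T L" for L
    unfolding X0_def using that by (rule exists_superset_T_Int_eq)
  have "\<exists>K. K \<subseteq> X \<and> x0 \<in> K \<and> K = T K" if "X = X0" "x0 \<in> X" for x0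
  proof -
    have "x0 \<in> X0"
      using that by simp
    then have "{x0} \<subseteq> T {x0}"
      unfolding X0_def by simp
    then obtain K where K: "K \<subseteq> X" "{x0} \<subseteq> K" "T K \<inter> X0 = K"
      using extension[of "{x0}"] \<open>x0 \<in> X\<close> by blast
    have "T K \<subseteq> X0"
      using T_subset_carrier[OF \<open>K \<subseteq> X\<close>] \<open>X = X0\<close> by simp
    then have "K = T K"
      using K(3) by (simp add: Int_absorb2)
    then show ?thesis
      using K by blast
  qed
  then show ?thesis
    using extension[OF K0X K0T] by blast
qed

end
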